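(* Let $p,q>1$ be real numbers with $\frac1p+\frac1q=1$, let $n\ge1$ and let $a_1,\dots,a_n,b_1,\dots,b_n>0$. Put $S_a=\sum_{j=1}^n a_j^p$, $S_b=\sum_{j=1}^n b_j^q$, $$A=\frac{1}{2pq}S_a^{1/p}S_b^{1/q}\sum_{i=1}^n \left(\frac{a_i^p}{S_a}-\frac{b_i^q}{S_b}\right)^2,$$ $$m=\min_{1\le i\le n}\min\left\{\frac{a_i^p}{S_a},\ \frac{b_i^q}{S_b}\right\},\qquad M=\max_{1\le i\le n}\max\left\{\frac{a_i^p}{S_a},\ \frac{b_i^q}{S_b}\right\}.$$ Then $$\frac{A}{M}\leq S_a^{1/p}S_b^{1/q}-\sum_{i=1}^n a_ib_i\leq\frac{A}{m}.$$ *)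

theory Defs
  imports Complex_Main
begin

end

theory Submission
  imports Defs
begin

(*
  Write l = 1/p, so 1/q = 1 - l, and
  normalise x_i = a_i^p / S_a, y_i = b_i^q / S_b, so that sum x = sum y = 1 and
  x_i^l y_i^(1-l) = a_i b_i / (S_a^(1/p) S_b^(1/q)).  The Hoelder gap, divided by
  S_a^(1/p) S_b^(1/q), is then the sum of the weighted AM-GM gaps
  l x_i + (1-l) y_i - x_i^l y_i^(1-l).

  1. For t >= 1 the one-variable gap  l t + (1-l) - t^l  lies between
     l(1-l)(t-1)^2/(2t) and l(1-l)(t-1)^2/2; both bounds follow from "f(1) = 0 and
     f' >= 0 on [1,oo)" applied repeatedly to successive derivatives.
  2. Setting t = x/y gives bounds l(1-l)(x-y)^2/(2 max) <= gap <= l(1-l)(x-y)^2/(2 min)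
     for the two-variable AM-GM gap.
  3. Summing over a probability-vector pair yields the normalised theorem, and
     rescaling by S_a^(1/p) S_b^(1/q) gives mainTheorem3.
*)

lemma nonneg_from_one_by_derivative:
  fixes f f' :: "real \<Rightarrow> real"
  assumes "t \<ge> 1" and "f 1 = 0"
    and "\<And>s. s \<ge> 1 \<Longrightarrow> (f has_real_derivative f' s) (at s)"
    and "\<And>s. s \<ge> 1 \<Longrightarrow> f' s \<ge> 0"
  shows "f t \<ge> 0"
proof -
  have "f 1 \<le> f t"
    by (rule DERIV_nonneg_imp_nondecreasing[OF assms(1)]) (use assms in auto)
  thus ?thesis using assms by simp
qed

text \<open>Upper bound for the one-variable AM-GM gap \<open>l t + (1 - l) - t\<^sup>l\<close>, \<open>t \<ge> 1\<close>:
  differentiate twice; the second derivative of the difference is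
  \<open>l(1-l)(1 - s\<^bsup>l-2\<^esup>) \<ge> 0\<close>.\<close>

lemma am_gm_gap_upper:
  fixes l t :: real
  assumes l: "0 < l" "l < 1" and t: "t \<ge> 1"
  shows "l * t + (1 - l) - t powr l \<le> l * (1 - l) * (t - 1)^2 / 2"
proof -
  define g' where "g' s = l * (1 - l) * (s - 1) - l + l * s powr (l - 1)" for s :: real
  have g'_nonneg: "g' s \<ge> 0" if "s \<ge> 1" for s
  proof (rule nonneg_from_one_by_derivative[where f=g' and f'="\<lambda>s. l * (1 - l) * (1 - s powr (l - 2))"])
    show "(g' has_real_derivative l * (1 - l) * (1 - s powr (l - 2))) (at s)" if "s \<ge> 1" for s
      unfolding g'_def using that by (auto intro!: derivative_eq_intros simp: algebra_simps)
    show "l * (1 - l) * (1 - s powr (l - 2)) \<ge> 0" if "s \<ge> 1" for s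
    proof -
      have "s powr (l - 2) \<le> s powr 0" using that l by (intro powr_mono) auto
      thus ?thesis using that l by simp
    qed
  qed (use that in \<open>simp_all add: g'_def\<close>)
  define g where "g s = l * (1 - l) * (s - 1)^2 / 2 - (l * s + (1 - l) - s powr l)" for s :: real
  have "g t \<ge> 0"
  proof (rule nonneg_from_one_by_derivative[where f=g and f'=g'])
    show "(g has_real_derivative g' s) (at s)" if "s \<ge> 1" for s
      unfolding g_def g'_def using that
      by (auto intro!: derivative_eq_intros simp: field_simps power2_eq_square)
  qed (use t g'_nonneg in \<open>simp_all add: g_def\<close>)
  thus ?thesis by (simp add: g_def)
qed

text \<open>Lower bound for the same gap: \<open>t\<close> times the gap dominates \<open>l(1-l)(t-1)\<^sup>2/2\<close>;
  three differentiations reduce this to \<open>l(1+l)(1-l) s\<^bsup>l-2\<^esup> \<ge> 0\<close>.\<close>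

lemma am_gm_gap_lower:
  fixes l t :: real
  assumes l: "0 < l" "l < 1" and t: "t \<ge> 1"
  shows "l * (1 - l) * (t - 1)^2 / (2 * t) \<le> l * t + (1 - l) - t powr l"
proof -
  have powr_shift: "s * s powr (e - 1) = s powr e" if "s \<ge> 1" for s e :: real
    using powr_add[of s 1 "e - 1"] that by simp
  have powr_shift2: "s * s powr (l - 2) = s powr (l - 1)" if "s \<ge> 1" for s :: real
    using powr_shift[of s "l - 1"] that by simp
  define h'' where "h'' s = 2 * l - l * (1 + l) * s powr (l - 1) - l * (1 - l)" for s :: real
  have h''_nonneg: "h'' s \<ge> 0" if "s \<ge> 1" for s
  proof (rule nonneg_from_one_by_derivative[where f=h'' and f'="\<lambda>s. l * (1 + l) * (1 - l) * s powr (l - 2)"])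
    show "(h'' has_real_derivative l * (1 + l) * (1 - l) * s powr (l - 2)) (at s)" if "s \<ge> 1" for s
      unfolding h''_def using that by (auto intro!: derivative_eq_intros simp: field_simps)
    show "l * (1 + l) * (1 - l) * s powr (l - 2) \<ge> 0" for s using l by simp
  qed (use that l in \<open>simp_all add: h''_def algebra_simps\<close>)
  define h' where "h' s = (l * s + (1 - l) - s powr l) + s * (l - l * s powr (l - 1))
                         - l * (1 - l) * (s - 1)" for s :: real
  have h'_nonneg: "h' s \<ge> 0" if "s \<ge> 1" for s
  proof (rule nonneg_from_one_by_derivative[where f=h' and f'=h''])
    show "(h' has_real_derivative h'' s) (at s)" if "s \<ge> 1" for s
      unfolding h'_def h''_def using that
      by (auto intro!: derivative_eq_intros simp: field_simps powr_shift powr_shift2)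
  qed (use that h''_nonneg in \<open>simp_all add: h'_def algebra_simps\<close>)
  define h where "h s = s * (l * s + (1 - l) - s powr l) - l * (1 - l) * (s - 1)^2 / 2" for s :: real
  have "h t \<ge> 0"
  proof (rule nonneg_from_one_by_derivative[where f=h and f'=h'])
    show "(h has_real_derivative h' s) (at s)" if "s \<ge> 1" for s
      unfolding h_def h'_def using that
      by (auto intro!: derivative_eq_intros simp: field_simps powr_shift powr_shift2 power2_eq_square)
  qed (use t h'_nonneg in \<open>simp_all add: h_def\<close>)
  hence "l * (1 - l) * (t - 1)^2 / 2 \<le> t * (l * t + (1 - l) - t powr l)" by (simp add: h_def)
  thus ?thesis using t by (simp add: field_simps)
qed

lemma weighted_am_gm_gap_ordered:
  fixes l x y :: real
  assumes l: "0 < l" "l < 1" and xy: "0 < y" "y \<le> x"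
  shows "l * (1 - l) * (x - y)^2 / (2 * x) \<le> l * x + (1 - l) * y - x powr l * y powr (1 - l)
       \<and> l * x + (1 - l) * y - x powr l * y powr (1 - l) \<le> l * (1 - l) * (x - y)^2 / (2 * y)"
proof -
  define t where "t = x / y"
  have t: "t \<ge> 1" using xy by (simp add: t_def)
  have x: "x = y * t" using xy by (simp add: t_def)
  have gap: "l * x + (1 - l) * y - x powr l * y powr (1 - l) = y * (l * t + (1 - l) - t powr l)"
    using xy by (simp add: x powr_mult powr_diff algebra_simps)
  have upper: "y * (l * t + (1 - l) - t powr l) \<le> y * (l * (1 - l) * (t - 1)^2 / 2)"
    using am_gm_gap_upper[OF l t] xy by (intro mult_left_mono) auto
  have lower: "y * (l * (1 - l) * (t - 1)^2 / (2 * t)) \<le> y * (l * t + (1 - l) - t powr l)"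
    using am_gm_gap_lower[OF l t] xy by (intro mult_left_mono) auto
  have "y * (l * (1 - l) * (t - 1)^2 / 2) = l * (1 - l) * (x - y)^2 / (2 * y)"
    using xy by (simp add: x field_simps power2_eq_square)
  moreover have "y * (l * (1 - l) * (t - 1)^2 / (2 * t)) = l * (1 - l) * (x - y)^2 / (2 * x)"
    using xy t by (simp add: x field_simps power2_eq_square)
  ultimately show ?thesis using upper lower gap by linarith
qed

text \<open>The case \<open>x < y\<close> reduces to the
  ordered one by exchanging the roles of \<open>(x, l)\<close> and \<open>(y, 1 - l)\<close>.\<close>

lemma weighted_am_gm_gap_bounds:
  fixes l x y mm MM :: real
  assumes l: "0 < l" "l < 1"
    and bounds: "0 < mm" "mm \<le> x" "mm \<le> y" "x \<le> MM" "y \<le> MM"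
  shows "l * (1 - l) * (x - y)^2 / (2 * MM) \<le> l * x + (1 - l) * y - x powr l * y powr (1 - l)
       \<and> l * x + (1 - l) * y - x powr l * y powr (1 - l) \<le> l * (1 - l) * (x - y)^2 / (2 * mm)"
proof -
  have coeff: "0 \<le> l * (1 - l) * (x - y)^2" using l by simp
  have shrink: "l * (1 - l) * (x - y)^2 / (2 * v) \<le> l * (1 - l) * (x - y)^2 / (2 * u)"
    if "0 < u" "u \<le> v" for u v
    using that coeff by (intro divide_left_mono) auto
  show ?thesis
  proof (cases "y \<le> x")
    case True
    thus ?thesis using weighted_am_gm_gap_ordered[OF l _ True] bounds
        shrink[of x MM] shrink[of mm y] by linarith
  next
    case False
    have l': "0 < 1 - l" "1 - l < 1" using l by auto
    have "(y - x)^2 = (x - y)^2" by (simp add: power2_commute)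
    hence "l * (1 - l) * (x - y)^2 / (2 * y) \<le> l * x + (1 - l) * y - x powr l * y powr (1 - l)
         \<and> l * x + (1 - l) * y - x powr l * y powr (1 - l) \<le> l * (1 - l) * (x - y)^2 / (2 * x)"
      using weighted_am_gm_gap_ordered[OF l', of x y] False bounds by (simp add: algebra_simps)
    thus ?thesis using bounds shrink[of y MM] shrink[of mm x] by linarith
  qed
qed

lemma hoelder_defect_normalised:
  fixes l m M :: real and x y :: "'i \<Rightarrow> real" and I :: "'i set"
  assumes l: "0 < l" "l < 1"
    and sums: "sum x I = 1" "sum y I = 1"
    and m: "0 < m"
    and bounds: "\<And>i. i \<in> I \<Longrightarrow> m \<le> x i \<and> m \<le> y i \<and> x i \<le> M \<and> y i \<le> M"
  defines "D \<equiv> (\<Sum>i\<in>I. (x i - y i)^2)"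
  shows "l * (1 - l) * D / (2 * M) \<le> 1 - (\<Sum>i\<in>I. x i powr l * y i powr (1 - l))
       \<and> 1 - (\<Sum>i\<in>I. x i powr l * y i powr (1 - l)) \<le> l * (1 - l) * D / (2 * m)"
proof -
  let ?gap = "\<lambda>i. l * x i + (1 - l) * y i - x i powr l * y i powr (1 - l)"
  have defect: "1 - (\<Sum>i\<in>I. x i powr l * y i powr (1 - l)) = (\<Sum>i\<in>I. ?gap i)"
    using sums by (simp add: sum.distrib sum_subtractf sum_distrib_left[symmetric])
  have "(\<Sum>i\<in>I. l * (1 - l) * (x i - y i)^2 / (2 * M)) \<le> (\<Sum>i\<in>I. ?gap i)"
    and "(\<Sum>i\<in>I. ?gap i) \<le> (\<Sum>i\<in>I. l * (1 - l) * (x i - y i)^2 / (2 * m))"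
    by (intro sum_mono; use weighted_am_gm_gap_bounds[OF l m] bounds in blast)+
  thus ?thesis
    unfolding defect D_def by (simp add: sum_distrib_left sum_divide_distrib)
qed

lemma Min_Max_common_bounds:
  fixes x y :: "'i \<Rightarrow> real"
  assumes "finite I" "I \<noteq> {}" and pos: "\<And>i. i \<in> I \<Longrightarrow> 0 < x i \<and> 0 < y i"
  defines "m \<equiv> Min ((\<lambda>i. min (x i) (y i)) ` I)"
    and "M \<equiv> Max ((\<lambda>i. max (x i) (y i)) ` I)"
  shows "0 < m" and "\<And>i. i \<in> I \<Longrightarrow> m \<le> x i \<and> m \<le> y i \<and> x i \<le> M \<and> y i \<le> M"
proof -
  show "0 < m" unfolding m_def using assms by (subst Min_gr_iff) auto
  fix i assume "i \<in> I"
  hence "m \<le> min (x i) (y i)" and "max (x i) (y i) \<le> M"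
    unfolding m_def M_def using assms(1) by (intro Min_le Max_ge; simp)+
  thus "m \<le> x i \<and> m \<le> y i \<and> x i \<le> M \<and> y i \<le> M" by simp
qed

lemma powr_normalised_root:
  fixes a S p :: real
  assumes "0 < a" "0 < S" "p \<noteq> 0"
  shows "(a powr p / S) powr (1 / p) = a / S powr (1 / p)"
  using assms by (simp add: powr_divide powr_powr)

theorem mainTheorem3:
  fixes p q :: real and n :: nat and a b :: "nat \<Rightarrow> real"
  assumes "p > 1" and "q > 1" and "1 / p + 1 / q = 1"
    and "n \<ge> 1"
    and "\<And>i. i \<in> {1..n} \<Longrightarrow> a i > 0"
    and "\<And>i. i \<in> {1..n} \<Longrightarrow> b i > 0"
  defines "Sa \<equiv> (\<Sum>j=1..n. a j powr p)"
    and "Sb \<equiv> (\<Sum>j=1..n. b j powr q)"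
  defines "A \<equiv> 1 / (2 * p * q) * Sa powr (1 / p) * Sb powr (1 / q)
                  * (\<Sum>i=1..n. (a i powr p / Sa - b i powr q / Sb)\<^sup>2)"
    and "m \<equiv> Min ((\<lambda>i. min (a i powr p / Sa) (b i powr q / Sb)) ` {1..n})"
    and "M \<equiv> Max ((\<lambda>i. max (a i powr p / Sa) (b i powr q / Sb)) ` {1..n})"
  shows "A / M \<le> Sa powr (1 / p) * Sb powr (1 / q) - (\<Sum>i=1..n. a i * b i)
       \<and> Sa powr (1 / p) * Sb powr (1 / q) - (\<Sum>i=1..n. a i * b i) \<le> A / m"
proof -
  define x where "x i = a i powr p / Sa" for i
  define y where "y i = b i powr q / Sb" for i
  define P where "P = Sa powr (1 / p) * Sb powr (1 / q)"
  define D where "D = (\<Sum>i=1..n. (x i - y i)^2)"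
  have ne: "{1..n} \<noteq> {}" using assms(4) by simp
  have "0 < a i powr p" "0 < b i powr q" if "i \<in> {1..n}" for i
    using assms(5,6)[OF that] by simp_all
  hence Sa: "Sa > 0" and Sb: "Sb > 0" unfolding Sa_def Sb_def using ne by (auto intro!: sum_pos)
  have l: "0 < 1 / p" "1 / p < 1" and q: "1 / q = 1 - 1 / p" using assms(1,3) by auto
  have pos: "0 < x i \<and> 0 < y i" if "i \<in> {1..n}" for i
    using assms(5,6)[OF that] Sa Sb by (simp add: x_def y_def)
  have "sum x {1..n} = 1" "sum y {1..n} = 1"
    using Sa Sb by (simp_all add: x_def y_def Sa_def Sb_def sum_divide_distrib[symmetric])
  from hoelder_defect_normalised[OF l this Min_Max_common_bounds[OF _ ne pos]]
  have normalised: "(1 / p) * (1 / q) * D / (2 * M) \<le> 1 - (\<Sum>i=1..n. a i * b i) / P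
     \<and> 1 - (\<Sum>i=1..n. a i * b i) / P \<le> (1 / p) * (1 / q) * D / (2 * m)"
    using assms(1,2,5,6) Sa Sb
    by (simp add: q[symmetric] m_def M_def x_def y_def D_def P_def powr_normalised_root
        sum_divide_distrib)
  have "P > 0" using Sa Sb by (simp add: P_def)
  moreover have "A = P * ((1 / p) * (1 / q) * D / 2)"
    by (simp add: A_def P_def D_def x_def y_def)
  ultimately show ?thesis
    using normalised unfolding P_def[symmetric]
    by (simp add: field_simps)
qed

end
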